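(* Let $N\ge1$, $v>0$, $\varepsilon>0$, $L_1>0$ and $L_2=1$. Consider the continuous-time Markov chain $(N(t),W(t))$ on $\{0,\dots,N\}\times\{A,I\}$ with transition rates $(k,A)\to(k+1,A)$ at rate $(N-k)v$, $(k,A)\to(k-1,A)$ at rate $k$, $(k,I)\to(k+1,I)$ at rate $\varepsilon(N-k)v$, $(k,I)\to(k-1,I)$ at rate $k$, $(k,I)\to(k,A)$ at rate $L_2$, and $(k,A)\to(k,I)$ at rate $L_1\varepsilon^k$. Then the stationary marginal distribution of $N(t)$ is $$\bar\pi(k)=\frac{\binom Nk(\frac{v}{1+v})^k(\frac{1}{1+v})^{N-k}}{1+(\frac{1+\varepsilon v}{1+v})^NL_1}+\frac{\binom Nk(\frac{\varepsilon v}{1+\varepsilon v})^k(\frac{1}{1+\varepsilon v})^{N-k}}{1+(\frac{1+v}{1+\varepsilon v})^NL_1^{-1}},\qquad k=0,\dots,N,$$ a mixture of the binomial distributions $\mathcal B(N,\frac{v}{1+v})$ and $\mathcal B(N,\frac{\varepsilon v}{1+\varepsilon v})$.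
   Context: This is a model of allosteric multisite phosphorylation: $N(t)$ is the number of phosphorylated sites among $N$, $W(t)\in\{A,I\}$ is the active/inactive state of the protein, $v$ is the kinase/ligand concentration. *)

theory Defs
  imports Complex_Main
begin

text \<open>States are pairs (k, w) with k in {0..N} the number of phosphorylated sites and
  w = True for the active state A, w = False for the inactive state I.\<close>

definition states :: "nat \<Rightarrow> (nat \<times> bool) set" where
  "states N = {0..N} \<times> UNIV"

definition rate :: "nat \<Rightarrow> real \<Rightarrow> real \<Rightarrow> real \<Rightarrow> nat \<times> bool \<Rightarrow> nat \<times> bool \<Rightarrow> real" where
  "rate N v eps L1 s t =
     (let (k, a) = s; (j, b) = t in
      if a = b then
        (if j = k + 1 then (if a then real (N - k) * v else eps * real (N - k) * v)
         else if j + 1 = k then real k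
         else 0)
      else if j = k then (if a then L1 * eps ^ k else 1)
      else 0)"

definition stationary :: "nat \<Rightarrow> real \<Rightarrow> real \<Rightarrow> real \<Rightarrow> (nat \<times> bool \<Rightarrow> real) \<Rightarrow> bool" where
  "stationary N v eps L1 p \<longleftrightarrow>
     (\<forall>s\<in>states N. p s \<ge> 0) \<and>
     (\<Sum>s\<in>states N. p s) = 1 \<and>
     (\<forall>s\<in>states N.
        (\<Sum>t\<in>states N - {s}. p t * rate N v eps L1 t s) =
        p s * (\<Sum>t\<in>states N - {s}. rate N v eps L1 s t))"

definition pi_bar :: "nat \<Rightarrow> real \<Rightarrow> real \<Rightarrow> real \<Rightarrow> nat \<Rightarrow> real" where
  "pi_bar N v eps L1 k =
     real (N choose k) * (v / (1 + v)) ^ k * (1 / (1 + v)) ^ (N - k)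
       / (1 + ((1 + eps * v) / (1 + v)) ^ N * L1)
   + real (N choose k) * (eps * v / (1 + eps * v)) ^ k * (1 / (1 + eps * v)) ^ (N - k)
       / (1 + ((1 + v) / (1 + eps * v)) ^ N * inverse L1)"

end

theory Submission
  imports Defs
begin

text \<open>The weights w(k,A) = C(N,k) v^k and w(k,I) = L1 C(N,k) (eps v)^k satisfy detailed balance,
  so their normalisation is stationary; its k-marginal is the stated mixture of binomials, the
  two components carrying total masses (1+v)^N and L1 (1+eps v)^N.  Uniqueness is a maximum
  principle: for any solution p of the balance equations, p/w attains its maximum on a set that
  is closed under positive-rate transitions, and the chain is irreducible.\<close>

definition global_balance :: "'a set \<Rightarrow> ('a \<Rightarrow> 'a \<Rightarrow> real) \<Rightarrow> ('a \<Rightarrow> real) \<Rightarrow> bool" where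
  "global_balance S r p \<longleftrightarrow>
     (\<forall>s\<in>S. (\<Sum>t\<in>S - {s}. p t * r t s) = p s * (\<Sum>t\<in>S - {s}. r s t))"

lemma detailed_balance_imp_global_balance:
  assumes "\<And>s t. s \<in> S \<Longrightarrow> t \<in> S \<Longrightarrow> w t * r t s = w s * r s t"
  shows "global_balance S r w"
  unfolding global_balance_def
  by (auto simp: sum_distrib_left assms intro!: sum.cong)

lemma global_balance_max_propagates:
  assumes "finite S" and bal: "global_balance S r p"
    and detailed: "\<And>s t. s \<in> S \<Longrightarrow> t \<in> S \<Longrightarrow> w t * r t s = w s * r s t"
    and w_pos: "\<And>s. s \<in> S \<Longrightarrow> w s > 0"
    and r_nonneg: "\<And>s t. s \<in> S \<Longrightarrow> t \<in> S \<Longrightarrow> r s t \<ge> 0"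
    and s: "s \<in> S" and t: "t \<in> S" "t \<noteq> s" and r_pos: "r s t > 0"
    and max: "\<And>u. u \<in> S \<Longrightarrow> p u / w u \<le> p s / w s"
  shows "p t / w t = p s / w s"
proof -
  define M where "M = p s / w s"
  define d where "d u = (M - p u / w u) * (w s * r s u)" for u
  have "(\<Sum>u\<in>S - {s}. p u * r u s) = (\<Sum>u\<in>S - {s}. p u / w u * (w s * r s u))"
  proof (rule sum.cong)
    fix u assume "u \<in> S - {s}"
    then have "w u \<noteq> 0" using w_pos by force
    then have "p u * r u s = p u / w u * (w u * r u s)" by simp
    moreover have rev: "w u * r u s = w s * r s u" using detailed \<open>u \<in> S - {s}\<close> s by blast
    ultimately show "p u * r u s = p u / w u * (w s * r s u)" by (simp only: rev)
  qed simp
  moreover have "p s * (\<Sum>u\<in>S - {s}. r s u) = (\<Sum>u\<in>S - {s}. M * (w s * r s u))"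
    using w_pos[OF s] by (simp add: M_def sum_distrib_left)
  ultimately have "(\<Sum>u\<in>S - {s}. d u) = 0"
    using bal s by (simp add: global_balance_def d_def left_diff_distrib sum_subtractf)
  moreover have "\<forall>u\<in>S - {s}. d u \<ge> 0"
    using max w_pos[OF s] r_nonneg[OF s] by (auto simp: d_def M_def)
  ultimately have "d t = 0"
    using sum_nonneg_eq_0_iff[of "S - {s}" d] \<open>finite S\<close> t by blast
  moreover have "w s * r s t > 0" using w_pos[OF s] r_pos by simp
  ultimately show ?thesis by (auto simp: d_def M_def)
qed

lemma global_balance_proportional:
  assumes "finite S" "S \<noteq> {}" and bal: "global_balance S r p"
    and detailed: "\<And>s t. s \<in> S \<Longrightarrow> t \<in> S \<Longrightarrow> w t * r t s = w s * r s t"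
    and w_pos: "\<And>s. s \<in> S \<Longrightarrow> w s > 0"
    and r_nonneg: "\<And>s t. s \<in> S \<Longrightarrow> t \<in> S \<Longrightarrow> r s t \<ge> 0"
    and irreducible: "\<And>T. T \<subseteq> S \<Longrightarrow> T \<noteq> {} \<Longrightarrow>
       (\<And>s t. s \<in> T \<Longrightarrow> t \<in> S \<Longrightarrow> t \<noteq> s \<Longrightarrow> r s t > 0 \<Longrightarrow> t \<in> T) \<Longrightarrow> T = S"
  shows "\<exists>c. \<forall>s\<in>S. p s = c * w s"
proof -
  define M where "M = Max ((\<lambda>u. p u / w u) ` S)"
  define T where "T = {s\<in>S. p s / w s = M}"
  have le_M: "p u / w u \<le> M" if "u \<in> S" for u
    using \<open>finite S\<close> that by (simp add: M_def)
  have "M \<in> (\<lambda>u. p u / w u) ` S"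
    unfolding M_def using \<open>finite S\<close> \<open>S \<noteq> {}\<close> by (intro Max_in) auto
  then have "T \<noteq> {}" by (auto simp: T_def)
  moreover have "t \<in> T" if "s \<in> T" "t \<in> S" "t \<noteq> s" "r s t > 0" for s t
    using global_balance_max_propagates[OF assms(1,3-6), of s t] that le_M
    by (auto simp: T_def)
  ultimately have "T = S" using irreducible[of T] by (auto simp: T_def)
  have "p s = M * w s" if "s \<in> S" for s
  proof -
    have "p s / w s = M" using \<open>T = S\<close> that by (auto simp: T_def)
    then show ?thesis using w_pos[OF that] by (simp add: divide_eq_eq)
  qed
  then show ?thesis by blast
qed

definition weight :: "nat \<Rightarrow> real \<Rightarrow> real \<Rightarrow> real \<Rightarrow> nat \<times> bool \<Rightarrow> real" where
  "weight N v eps L1 s =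
     (let (k, a) = s in real (N choose k) * (if a then v ^ k else L1 * (eps * v) ^ k))"

lemma of_nat_choose_Suc_mult:
  "real (N choose Suc j) * real (Suc j) = real (N choose j) * real (N - j)"
proof -
  have "Suc j * (N choose Suc j) = (N - j) * (N choose j)"
    using binomial_absorption[of j N] binomial_absorb_comp[of N j] by simp
  then show ?thesis by (metis of_nat_mult mult.commute)
qed

lemma weight_rate_detailed_balance:
  "weight N v eps L1 t * rate N v eps L1 t s = weight N v eps L1 s * rate N v eps L1 s t"
proof -
  obtain j b k a where st: "t = (j, b)" "s = (k, a)" by (cases t, cases s)
  show ?thesis
    using of_nat_choose_Suc_mult[of N j] of_nat_choose_Suc_mult[of N k]
    by (cases "a = b") (auto simp: st weight_def rate_def power_Suc power_mult_distrib)
qed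

lemma rate_nonneg: "v > 0 \<Longrightarrow> eps > 0 \<Longrightarrow> L1 > 0 \<Longrightarrow> rate N v eps L1 s t \<ge> 0"
  unfolding rate_def by (auto split: prod.splits)

lemma weight_pos: "v > 0 \<Longrightarrow> eps > 0 \<Longrightarrow> L1 > 0 \<Longrightarrow> s \<in> states N \<Longrightarrow> weight N v eps L1 s > 0"
  unfolding weight_def states_def by (auto split: prod.splits)

lemma finite_states: "finite (states N)"
  unfolding states_def by simp

lemma states_subset_closed:
  assumes "(k, a) \<in> T" "k \<le> N"
    and down: "\<And>n b. n < N \<Longrightarrow> (Suc n, b) \<in> T \<Longrightarrow> (n, b) \<in> T"
    and up: "\<And>n b. n < N \<Longrightarrow> (n, b) \<in> T \<Longrightarrow> (Suc n, b) \<in> T"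
    and flip: "\<And>n b. n \<le> N \<Longrightarrow> (n, b) \<in> T \<Longrightarrow> (n, \<not> b) \<in> T"
  shows "states N \<subseteq> T"
proof -
  have "(0, a) \<in> T"
    using le0[of k] by (induction rule: inc_induct) (use assms(1,2) down in auto)
  then have column: "(j, a) \<in> T" if "j \<le> N" for j
    using that by (induction j) (use up in auto)
  have "(j, b) \<in> T" if "j \<le> N" for j b
    using column[OF that] flip[OF that, of a] by (cases "b = a") auto
  then show ?thesis by (auto simp: states_def)
qed

lemma rate_irreducible:
  assumes "v > 0" "eps > 0" "L1 > 0"
    and "T \<subseteq> states N" "T \<noteq> {}"
    and closed: "\<And>s t. s \<in> T \<Longrightarrow> t \<in> states N \<Longrightarrow> t \<noteq> s \<Longrightarrow> rate N v eps L1 s t > 0 \<Longrightarrow> t \<in> T"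
  shows "T = states N"
proof -
  obtain k a where "(k, a) \<in> T" "k \<le> N"
    using \<open>T \<subseteq> states N\<close> \<open>T \<noteq> {}\<close> unfolding states_def by fastforce
  have "states N \<subseteq> T"
  proof (rule states_subset_closed[OF \<open>(k, a) \<in> T\<close> \<open>k \<le> N\<close>])
    fix n b
    show "(n, b) \<in> T" if "n < N" "(Suc n, b) \<in> T"
      using that closed[of "(Suc n, b)" "(n, b)"] by (auto simp: states_def rate_def)
    show "(Suc n, b) \<in> T" if "n < N" "(n, b) \<in> T"
      using that assms(1,2) closed[of "(n, b)" "(Suc n, b)"] by (auto simp: states_def rate_def)
    show "(n, \<not> b) \<in> T" if "n \<le> N" "(n, b) \<in> T"
      using that assms(2,3) closed[of "(n, b)" "(n, \<not> b)"] by (auto simp: states_def rate_def)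
  qed
  then show ?thesis using \<open>T \<subseteq> states N\<close> by blast
qed

lemma sum_weight: "(\<Sum>s\<in>states N. weight N v eps L1 s) = (1 + v) ^ N + L1 * (1 + eps * v) ^ N"
proof -
  have "(\<Sum>s\<in>states N. weight N v eps L1 s)
      = (\<Sum>k\<le>N. \<Sum>a\<in>UNIV. weight N v eps L1 (k, a))"
    by (simp add: states_def atLeast0AtMost sum.cartesian_product)
  also have "\<dots> = (\<Sum>k\<le>N. real (N choose k) * v ^ k * 1 ^ (N - k))
        + L1 * (\<Sum>k\<le>N. real (N choose k) * (eps * v) ^ k * 1 ^ (N - k))"
    by (simp add: UNIV_bool weight_def sum.distrib sum_distrib_left algebra_simps)
  also have "\<dots> = (1 + v) ^ N + L1 * (1 + eps * v) ^ N"
    by (simp only: binomial_ring[symmetric] add.commute)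
  finally show ?thesis .
qed

lemma weight_marginal_eq_pi_bar:
  assumes "v > 0" "eps > 0" "L1 > 0" "k \<le> N"
  shows "(weight N v eps L1 (k, True) + weight N v eps L1 (k, False))
           / ((1 + v) ^ N + L1 * (1 + eps * v) ^ N) = pi_bar N v eps L1 k"
  (is "_ = ?rhs")
proof -
  define A B where "A = (1 + v) ^ N" and "B = (1 + eps * v) ^ N"
  have "A > 0" "B > 0" using assms by (simp_all add: A_def B_def add_pos_pos)
  have "(v / (1 + v)) ^ k * (1 / (1 + v)) ^ (N - k) = v ^ k / A"
    "(eps * v / (1 + eps * v)) ^ k * (1 / (1 + eps * v)) ^ (N - k) = (eps * v) ^ k / B"
    "((1 + eps * v) / (1 + v)) ^ N = B / A" "((1 + v) / (1 + eps * v)) ^ N = A / B"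
    using \<open>k \<le> N\<close> by (simp_all add: A_def B_def power_divide power_add[symmetric])
  then have "?rhs = real (N choose k) * (v ^ k / A) / (1 + B / A * L1)
        + real (N choose k) * ((eps * v) ^ k / B) / (1 + A / B * inverse L1)"
    unfolding pi_bar_def by (simp only: mult.assoc)
  also have "\<dots> = (real (N choose k) * v ^ k + real (N choose k) * (L1 * (eps * v) ^ k)) / (A + L1 * B)"
    using \<open>A > 0\<close> \<open>B > 0\<close> assms by (simp add: field_simps) (simp add: add_divide_distrib)
  finally show ?thesis by (simp add: weight_def A_def B_def)
qed

lemma stationary_normalized_weight:
  assumes "v > 0" "eps > 0" "L1 > 0"
  shows "stationary N v eps L1 (\<lambda>s. weight N v eps L1 s / (\<Sum>u\<in>states N. weight N v eps L1 u))"
proof -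
  let ?w = "weight N v eps L1"
  define Z where "Z = (\<Sum>u\<in>states N. ?w u)"
  have w_pos: "\<And>s. s \<in> states N \<Longrightarrow> ?w s > 0" using weight_pos assms by blast
  then have "Z > 0"
    unfolding Z_def using finite_states by (intro sum_pos) (auto simp: states_def)
  have "global_balance (states N) (rate N v eps L1) (\<lambda>s. ?w s / Z)"
    by (rule detailed_balance_imp_global_balance) (simp add: weight_rate_detailed_balance)
  then show ?thesis
    using w_pos \<open>Z > 0\<close>
    by (auto simp: stationary_def global_balance_def Z_def less_imp_le simp flip: sum_divide_distrib)
qed

lemma stationary_eq_normalized_weight:
  assumes "v > 0" "eps > 0" "L1 > 0" and st: "stationary N v eps L1 p" and "s \<in> states N"
  shows "p s = weight N v eps L1 s / (\<Sum>u\<in>states N. weight N v eps L1 u)"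
proof -
  let ?w = "weight N v eps L1" and ?r = "rate N v eps L1"
  have "\<exists>c. \<forall>s\<in>states N. p s = c * ?w s"
  proof (rule global_balance_proportional)
    show "global_balance (states N) ?r p"
      using st by (simp add: stationary_def global_balance_def)
    show "states N \<noteq> {}" by (auto simp: states_def)
    show "\<And>T. T \<subseteq> states N \<Longrightarrow> T \<noteq> {} \<Longrightarrow>
      (\<And>s t. s \<in> T \<Longrightarrow> t \<in> states N \<Longrightarrow> t \<noteq> s \<Longrightarrow> ?r s t > 0 \<Longrightarrow> t \<in> T) \<Longrightarrow> T = states N"
      by (rule rate_irreducible[OF assms(1-3)])
  qed (use finite_states rate_nonneg[OF assms(1-3)] weight_pos[OF assms(1-3)]
      weight_rate_detailed_balance in auto)
  then obtain c where c: "\<forall>s\<in>states N. p s = c * ?w s" ..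
  have "1 = (\<Sum>u\<in>states N. c * ?w u)"
    using st c by (simp add: stationary_def)
  then have "c = 1 / (\<Sum>u\<in>states N. ?w u)"
    by (auto simp: eq_divide_eq simp flip: sum_distrib_left)
  then show ?thesis using c \<open>s \<in> states N\<close> by simp
qed

theorem proposition1:
  fixes N :: nat and v eps L1 :: real
  assumes "N \<ge> 1" and "v > 0" and "eps > 0" and "L1 > 0"
  shows "(\<exists>p. stationary N v eps L1 p) \<and>
         (\<forall>p. stationary N v eps L1 p \<longrightarrow>
            (\<forall>k\<in>{0..N}. p (k, True) + p (k, False) = pi_bar N v eps L1 k))"
proof -
  have "p (k, True) + p (k, False) = pi_bar N v eps L1 k"
    if "stationary N v eps L1 p" and "k \<in> {0..N}" for p k
  proof -
    have "(k, True) \<in> states N" "(k, False) \<in> states N"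
      using \<open>k \<in> {0..N}\<close> by (auto simp: states_def)
    then have "p (k, True) + p (k, False) = (weight N v eps L1 (k, True) + weight N v eps L1 (k, False))
        / ((1 + v) ^ N + L1 * (1 + eps * v) ^ N)"
      using stationary_eq_normalized_weight[OF assms(2-4) that(1)]
      by (simp add: sum_weight add_divide_distrib)
    also have "\<dots> = pi_bar N v eps L1 k"
      using weight_marginal_eq_pi_bar[OF assms(2-4)] \<open>k \<in> {0..N}\<close> by simp
    finally show ?thesis .
  qed
  then show ?thesis
    using stationary_normalized_weight[OF assms(2-4)] by blast
qed

end
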